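(* Let $\pi$ be a policy in a goal-conditioned MDP with discrete state space $\mathcal{S}$, fixed goal $s_g$ and discount factor $\gamma \in [0,1)$. For every state $s_0 \in \mathcal{S}$, $$V^\pi(s_0 \mid s_g) \;\geq\; \gamma^{\,d^\pi_T(s_0, s_g)}.$$
   Context: A goal-conditioned MDP has a discrete state space $\mathcal{S}$, discrete action space $\mathcal{A}$, goal-dependent transition kernel $P(\cdot \mid s, a, s_g)$, and discount factor $\gamma\in[0,1)$. The reward is $r(s_t,a_t,s_{t+1}\mid s_g)=\mathbb{I}[s_{t+1}=s_g]$, and on reaching the goal $s_g$ the process moves to an absorbing state with zero reward thereafter. A policy $\pi(\cdot\mid s, s_g)$ is a distribution over actions. For states $s, s_g$, let $T(s_g\mid \pi, s)$ be the random variable giving the first time-step at which $s_g$ is encountered when starting at $s$ and following $\pi$ (with actions $a\sim\pi(\cdot\mid s,s_g)$ and next states drawn from $P$). The time-step (quasi)metric is $d^\pi_T(s, s_g) := \mathbb{E}[T(s_g\mid\pi,s)]$. Under this reward the value of a state is $V^\pi(s\mid s_g) = \mathbb{E}\big[\gamma^{T(s_g\mid \pi, s)}\big]$. *)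

theory Defs
  imports "HOL-Probability.Probability"
begin

text \<open>Goal-conditioned MDP with state type 's and action type 'a.
  Transition kernel: P s a g is the distribution of the next state
  (goal-dependent).  Policy: pol s g is a distribution over actions.\<close>

definition step :: "('s \<Rightarrow> 's \<Rightarrow> 'a pmf) \<Rightarrow> ('s \<Rightarrow> 'a \<Rightarrow> 's \<Rightarrow> 's pmf) \<Rightarrow> 's \<Rightarrow> 's \<Rightarrow> 's pmf" where
  "step pol P g s = bind_pmf (pol s g) (\<lambda>a. P s a g)"

primrec traj :: "('s \<Rightarrow> 's \<Rightarrow> 'a pmf) \<Rightarrow> ('s \<Rightarrow> 'a \<Rightarrow> 's \<Rightarrow> 's pmf) \<Rightarrow> 's \<Rightarrow> 's \<Rightarrow> nat \<Rightarrow> 's list pmf" where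
  "traj pol P g s 0 = return_pmf [s]"
| "traj pol P g s (Suc n) = bind_pmf (step pol P g s) (\<lambda>s'. map_pmf (Cons s) (traj pol P g s' n))"

definition hit_prob :: "('s \<Rightarrow> 's \<Rightarrow> 'a pmf) \<Rightarrow> ('s \<Rightarrow> 'a \<Rightarrow> 's \<Rightarrow> 's pmf) \<Rightarrow> 's \<Rightarrow> 's \<Rightarrow> nat \<Rightarrow> real" where
  "hit_prob pol P g s n =
     measure_pmf.prob (traj pol P g s n) {xs. xs ! n = g \<and> (\<forall>i<n. xs ! i \<noteq> g)}"

text \<open>Time-step quasimetric d_T(s,g) = E[T(g | pol, s)] in [0, \<infinity>]; the event
  that g is never reached (T = \<infinity>) contributes \<infinity> times its probability.\<close>
definition dT :: "('s \<Rightarrow> 's \<Rightarrow> 'a pmf) \<Rightarrow> ('s \<Rightarrow> 'a \<Rightarrow> 's \<Rightarrow> 's pmf) \<Rightarrow> 's \<Rightarrow> 's \<Rightarrow> ennreal" where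
  "dT pol P s g =
     (\<Sum>n. ennreal (real n * hit_prob pol P g s n))
     + \<top> * ennreal (1 - (\<Sum>n. hit_prob pol P g s n))"

text \<open>Value V(s | g) = E[gamma ^ T(g | pol, s)], with gamma ^ \<infinity> = 0.\<close>
definition Val :: "('s \<Rightarrow> 's \<Rightarrow> 'a pmf) \<Rightarrow> ('s \<Rightarrow> 'a \<Rightarrow> 's \<Rightarrow> 's pmf) \<Rightarrow> real \<Rightarrow> 's \<Rightarrow> 's \<Rightarrow> real" where
  "Val pol P \<gamma> s g = (\<Sum>n. \<gamma> ^ n * hit_prob pol P g s n)"

text \<open>gamma raised to an extended nonnegative real exponent d, with the
  conventions gamma^\<infinity> = 0 (as 0 \<le> gamma < 1) and 0^0 = 1.\<close>
definition gpow :: "real \<Rightarrow> ennreal \<Rightarrow> real" where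
  "gpow \<gamma> d = (if d = \<top> then 0
                 else if \<gamma> = 0 then (if d = 0 then 1 else 0)
                 else \<gamma> powr enn2real d)"

end

theory Submission
  imports Defs
begin

text \<open>The first hitting time T has law hit_prob, a sub-probability on the naturals: for n \<le> N the
  events "first hit at n" are disjoint events of the same trajectory law traj N. If T is infinite
  with positive probability, or has infinite mean, then d_T = \<infinity> and the bound is trivial.
  Otherwise the claim is Jensen's inequality \<gamma>^E T \<le> E \<gamma>^T for the convex function t \<mapsto> \<gamma>^t,
  obtained by integrating the tangent line of t \<mapsto> \<gamma>^t at t = E T.\<close>

lemma map_pmf_take_traj:
  "map_pmf (take (Suc n)) (traj pol P g s (n + k)) = traj pol P g s n"
proof (induction n arbitrary: s)
  case 0
  show ?case
    by (cases k) (simp_all add: map_bind_pmf pmf.map_comp o_def bind_return_pmf')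
next
  case (Suc n)
  have "map_pmf (take (Suc (Suc n))) (traj pol P g s (Suc n + k))
     = bind_pmf (step pol P g s) (\<lambda>s'. map_pmf (Cons s) (map_pmf (take (Suc n)) (traj pol P g s' (n + k))))"
    by (simp add: map_bind_pmf pmf.map_comp o_def)
  also have "\<dots> = traj pol P g s (Suc n)"
    using Suc.IH by simp
  finally show ?case .
qed

definition first_hit_at :: "'s \<Rightarrow> nat \<Rightarrow> 's list set" where
  "first_hit_at g n = {xs. xs ! n = g \<and> (\<forall>i<n. xs ! i \<noteq> g)}"

lemma hit_prob_eq_prob_traj:
  assumes "n \<le> N"
  shows "hit_prob pol P g s n = measure_pmf.prob (traj pol P g s N) (first_hit_at g n)"
proof -
  obtain k where N: "N = n + k"
    using assms le_Suc_ex by blast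
  have "hit_prob pol P g s n
      = measure_pmf.prob (map_pmf (take (Suc n)) (traj pol P g s N)) (first_hit_at g n)"
    unfolding hit_prob_def first_hit_at_def N map_pmf_take_traj by simp
  also have "\<dots> = measure_pmf.prob (traj pol P g s N) (take (Suc n) -` first_hit_at g n)"
    by simp
  also have "take (Suc n) -` first_hit_at g n = first_hit_at g n"
    unfolding first_hit_at_def by auto
  finally show ?thesis .
qed

lemma hit_prob_nonneg: "0 \<le> hit_prob pol P g s n"
  by (simp add: hit_prob_def)

lemma sum_hit_prob_le_1: "(\<Sum>n\<le>N. hit_prob pol P g s n) \<le> 1"
proof -
  have "disjoint_family_on (first_hit_at g) {..N}"
    unfolding disjoint_family_on_def first_hit_at_def by (auto, metis linorder_neq_iff)
  have "(\<Sum>n\<le>N. hit_prob pol P g s n) = (\<Sum>n\<le>N. measure_pmf.prob (traj pol P g s N) (first_hit_at g n))"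
    by (intro sum.cong refl hit_prob_eq_prob_traj) simp
  also have "\<dots> = measure_pmf.prob (traj pol P g s N) (\<Union>n\<le>N. first_hit_at g n)"
    using \<open>disjoint_family_on (first_hit_at g) {..N}\<close>
    by (simp add: measure_pmf.finite_measure_finite_Union)
  also have "\<dots> \<le> 1"
    by simp
  finally show ?thesis .
qed

lemma summable_hit_prob: "summable (hit_prob pol P g s)"
  using hit_prob_nonneg sum_hit_prob_le_1 by (rule bounded_imp_summable)

lemma suminf_hit_prob_le_1: "(\<Sum>n. hit_prob pol P g s n) \<le> 1"
proof (rule suminf_le_const[OF summable_hit_prob])
  fix N
  have "(\<Sum>n<N. hit_prob pol P g s n) \<le> (\<Sum>n\<le>N. hit_prob pol P g s n)"
    by (intro sum_mono2) (auto simp: hit_prob_nonneg)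
  then show "(\<Sum>n<N. hit_prob pol P g s n) \<le> 1"
    using sum_hit_prob_le_1[of pol P g s N] by linarith
qed

lemma dT_cases:
  obtains "dT pol P s g = \<top>"
  | d where "dT pol P s g = ennreal d" and "hit_prob pol P g s sums 1"
      and "(\<lambda>n. real n * hit_prob pol P g s n) sums d"
proof -
  let ?h = "hit_prob pol P g s"
  have mean_nonneg: "\<And>n. 0 \<le> real n * ?h n"
    by (simp add: hit_prob_nonneg)
  consider "(\<Sum>n. ?h n) < 1" | "?h sums 1"
    using suminf_hit_prob_le_1 summable_hit_prob by (metis le_less summable_sums)
  then show ?thesis
  proof cases
    case 1
    then have "dT pol P s g = \<top>"
      by (simp add: dT_def ennreal_top_mult)
    then show ?thesis
      using that(1) by blast
  next
    case 2
    then have dT: "dT pol P s g = (\<Sum>n. ennreal (real n * ?h n))"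
      by (simp add: dT_def sums_iff)
    show ?thesis
    proof (cases "(\<Sum>n. ennreal (real n * ?h n)) = \<top>")
      case True
      then show ?thesis using that(1) dT by simp
    next
      case False
      have "summable (\<lambda>n. real n * ?h n)"
        using summable_suminf_not_top[OF mean_nonneg False] .
      then show ?thesis
        using that(2)[OF _ 2] dT suminf_ennreal2[OF mean_nonneg] by (simp add: summable_sums)
    qed
  qed
qed

lemma powr_le_exp_tangent:
  fixes \<gamma> d t :: real
  assumes "0 < \<gamma>"
  shows "\<gamma> powr d * (1 + (t - d) * ln \<gamma>) \<le> \<gamma> powr t"
proof -
  have "\<gamma> powr t = \<gamma> powr d * \<gamma> powr (t - d)"
    using powr_add[of \<gamma> d "t - d"] by simp
  also have "\<gamma> powr (t - d) = exp ((t - d) * ln \<gamma>)"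
    using assms by (simp add: powr_def mult.commute)
  finally have "\<gamma> powr t = \<gamma> powr d * exp ((t - d) * ln \<gamma>)" .
  then show ?thesis
    using exp_ge_add_one_self[of "(t - d) * ln \<gamma>"] by (simp add: mult_left_mono)
qed

lemma powr_mean_le_suminf_power:
  fixes h :: "nat \<Rightarrow> real"
  assumes "0 < \<gamma>" and "\<And>n. 0 \<le> h n" and "h sums 1" and "(\<lambda>n. real n * h n) sums d"
    and "summable (\<lambda>n. \<gamma> ^ n * h n)"
  shows "\<gamma> powr d \<le> (\<Sum>n. \<gamma> ^ n * h n)"
proof -
  let ?c = "\<gamma> powr d"
  have "(\<lambda>n. ?c * h n + ?c * ln \<gamma> * (real n * h n) - ?c * d * ln \<gamma> * h n)
      sums (?c * 1 + ?c * ln \<gamma> * d - ?c * d * ln \<gamma> * 1)"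
    using assms(3,4) by (intro sums_diff sums_add sums_mult)
  then have "(\<lambda>n. ?c * (1 + (real n - d) * ln \<gamma>) * h n) sums ?c"
    by (simp add: algebra_simps)
  moreover have "?c * (1 + (real n - d) * ln \<gamma>) * h n \<le> \<gamma> ^ n * h n" for n
    using powr_le_exp_tangent[OF assms(1), of d "real n"] assms(1,2)
    by (simp add: mult_right_mono powr_realpow)
  ultimately show ?thesis
    using assms(5) by (intro sums_le[OF _ _ summable_sums])
qed

lemma mass_at_zero_if_mean_zero:
  fixes h :: "nat \<Rightarrow> real"
  assumes "\<And>n. 0 \<le> h n" and "h sums 1" and mean: "(\<lambda>n. real n * h n) sums 0"
  shows "h 0 = 1"
proof -
  have mean_terms_zero: "real n * h n = 0" for n
    using suminf_eq_zero_iff[of "\<lambda>n. real n * h n"] mean assms(1) by (simp add: sums_iff)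
  have "(if n = 0 then h n else 0) = h n" for n
    using mean_terms_zero[of n] by auto
  then have "h sums h 0"
    using sums_single[of 0 h] by simp
  then show ?thesis
    using \<open>h sums 1\<close> sums_unique2 by blast
qed

lemma gpow_mean_le_suminf_power:
  fixes h :: "nat \<Rightarrow> real"
  assumes "0 \<le> \<gamma>" and "\<And>n. 0 \<le> h n" and "h sums 1"
    and mean: "(\<lambda>n. real n * h n) sums d" and "summable (\<lambda>n. \<gamma> ^ n * h n)"
  shows "gpow \<gamma> (ennreal d) \<le> (\<Sum>n. \<gamma> ^ n * h n)"
proof -
  have "0 \<le> d"
    using mean assms(2) by (auto simp: sums_iff intro!: suminf_nonneg)
  have "(\<lambda>n. 0 ^ n * h n) = (\<lambda>n. if n = 0 then h n else 0)"
    by (auto simp: fun_eq_iff)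
  then have power_0_sum: "(\<Sum>n. 0 ^ n * h n) = h 0"
    using sums_single[of 0 h] by (simp add: sums_iff)
  consider "0 < \<gamma>" | "\<gamma> = 0" "d = 0" | "\<gamma> = 0" "0 < d"
    using assms(1) \<open>0 \<le> d\<close> by fastforce
  then show ?thesis
  proof cases
    case 1
    then show ?thesis
      using powr_mean_le_suminf_power[of \<gamma> h d] assms \<open>0 \<le> d\<close> by (simp add: gpow_def)
  next
    case 2
    then show ?thesis
      using mass_at_zero_if_mean_zero[OF assms(2,3)] mean power_0_sum by (simp add: gpow_def)
  next
    case 3
    then show ?thesis
      using power_0_sum assms(2) by (simp add: gpow_def)
  qed
qed

theorem proposition1:
  fixes pol :: "'s \<Rightarrow> 's \<Rightarrow> 'a pmf" and P :: "'s \<Rightarrow> 'a \<Rightarrow> 's \<Rightarrow> 's pmf"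
    and \<gamma> :: real and s\<^sub>g s\<^sub>0 :: 's
  assumes "0 \<le> \<gamma>" and "\<gamma> < 1"
  shows "Val pol P \<gamma> s\<^sub>0 s\<^sub>g \<ge> gpow \<gamma> (dT pol P s\<^sub>0 s\<^sub>g)"
proof -
  let ?h = "hit_prob pol P s\<^sub>g s\<^sub>0"
  have summable: "summable (\<lambda>n. \<gamma> ^ n * ?h n)"
  proof (rule summable_comparison_test'[OF summable_hit_prob])
    show "norm (\<gamma> ^ n * ?h n) \<le> ?h n" for n
      using assms hit_prob_nonneg[of pol P s\<^sub>g s\<^sub>0 n]
      by (simp add: abs_mult mult_left_le_one_le power_le_one)
  qed
  have Val: "Val pol P \<gamma> s\<^sub>0 s\<^sub>g = (\<Sum>n. \<gamma> ^ n * ?h n)"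
    by (simp add: Val_def)
  have Val_nonneg: "0 \<le> Val pol P \<gamma> s\<^sub>0 s\<^sub>g"
    unfolding Val using summable by (rule suminf_nonneg) (simp add: assms(1) hit_prob_nonneg)
  show ?thesis
  proof (cases rule: dT_cases[of pol P s\<^sub>0 s\<^sub>g])
    case 1
    then show ?thesis
      using Val_nonneg by (simp add: gpow_def)
  next
    case (2 d)
    have "gpow \<gamma> (ennreal d) \<le> (\<Sum>n. \<gamma> ^ n * ?h n)"
      using assms(1) hit_prob_nonneg 2(2,3) summable by (rule gpow_mean_le_suminf_power)
    then show ?thesis
      using Val 2(1) by simp
  qed
qed

end
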